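(* In the persuasion setting of the context, if the channel capacity is zero, $C(Q)=0$, then for all positive integers $k,n$, $$U^*_S(\mu^n,Q^k)=V\Big(\mu,\tfrac{k}{n}C(Q)\Big)=u^*_S(\mu).$$
   Context: For a finite set $S$, $\Delta(S)$ denotes the set of probability distributions on $S$. Let $\Omega$ be a finite set of states with prior $\mu\in\Delta(\Omega)$, $A$ a finite set of actions, $u_S,u_R:\Omega\times A\to\mathbb{R}$ payoffs of sender and receiver. A channel $(X,Y,Q)$: finite sets $X,Y$ and $Q:X\to\Delta(Y)$. For positive integers $n,k$: a sender strategy is $\sigma:\Omega^n\to\Delta(X^k)$; $\omega^n$ drawn i.i.d. from $\mu$ ($\mu^n(\omega^n)=\prod_t\mu(\omega_t)$), $x^k$ with probability $\sigma(x^k|\omega^n)$, $y^k$ with probability $Q^k(y^k|x^k)=\prod_tQ(y_t|x_t)$, observed by the receiver; a receiver strategy is $\tau:Y^k\to A^n$. Payoffs $\bar u_i(\omega^n,a^n)=\frac1n\sum_tu_i(\omega_t,a_t)$. $BR(\sigma)$: strategies $\tau$ such that for each $y^k$, $\tau(y^k)$ maximizes $\sum_{\omega^n,x^k}\mu^n(\omega^n)\sigma(x^k|\omega^n)Q^k(y^k|x^k)\bar u_R(\omega^n,a^n)$ over $a^n$. $U^*_S(\mu^n,Q^k)=\sup_\sigma\min_{\tau\in BR(\sigma)}\sum_{\omega^n,x^k,y^k}\mu^n(\omega^n)\sigma(x^k|\omega^n)Q^k(y^k|x^k)\bar u_S(\omega^n,\tau(y^k))$. $A^*(\nu)=\arg\max_a\sum_\omega\nu(\omega)u_R(\omega,a)$,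 $u^*_S(\nu)=\min_{a\in A^*(\nu)}\sum_\omega\nu(\omega)u_S(\omega,a)$. $H(q)=-\sum_sq(s)\log_2q(s)$. Capacity $C(Q)=\max_{p\in\Delta(X)}\big[H(\sum_xp(x)Q(\cdot|x))-\sum_xp(x)H(Q(\cdot|x))\big]$. A splitting of $\mu$: finite family $(\lambda_m,\nu_m)_m$, $\nu_m\in\Delta(\Omega)$, $\lambda_m\ge0$, $\sum\lambda_m=1$, $\sum\lambda_m\nu_m=\mu$. $V(\mu,c)=\sup\{\sum_m\lambda_mu^*_S(\nu_m):\text{splitting of }\mu,\ H(\mu)-\sum_m\lambda_mH(\nu_m)\le c\}$. *)

theory Defs
  imports Complex_Main
begin

definition is_dist :: "('s::finite \<Rightarrow> real) \<Rightarrow> bool" where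
  "is_dist p \<longleftrightarrow> (\<forall>s. 0 \<le> p s) \<and> (\<Sum>s\<in>UNIV. p s) = 1"

definition is_dist_on :: "'s set \<Rightarrow> ('s \<Rightarrow> real) \<Rightarrow> bool" where
  "is_dist_on S p \<longleftrightarrow> (\<forall>s\<in>S. 0 \<le> p s) \<and> (\<Sum>s\<in>S. p s) = 1"

definition words :: "nat \<Rightarrow> 'a list set" where
  "words n = {xs. length xs = n}"

definition prod_prior :: "('w \<Rightarrow> real) \<Rightarrow> 'w list \<Rightarrow> real" where
  "prod_prior \<mu> ws = prod_list (map \<mu> ws)"

definition chan_pow :: "('x \<Rightarrow> 'y \<Rightarrow> real) \<Rightarrow> 'x list \<Rightarrow> 'y list \<Rightarrow> real" where
  "chan_pow Q xs ys = prod_list (map2 Q xs ys)"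

definition avg_payoff :: "('w \<Rightarrow> 'a \<Rightarrow> real) \<Rightarrow> 'w list \<Rightarrow> 'a list \<Rightarrow> real" where
  "avg_payoff u ws as = (1 / real (length ws)) * (\<Sum>t<length ws. u (ws ! t) (as ! t))"

definition sender_strats :: "nat \<Rightarrow> nat \<Rightarrow> ('w list \<Rightarrow> 'x list \<Rightarrow> real) set" where
  "sender_strats n k = {\<sigma>. \<forall>ws\<in>words n. is_dist_on (words k) (\<sigma> ws)}"

text \<open>receiver's (unnormalised) expected payoff of a^n after observing y^k\<close>
definition recv_val ::
  "('w::finite \<Rightarrow> real) \<Rightarrow> ('w \<Rightarrow> 'a \<Rightarrow> real) \<Rightarrow> ('x::finite \<Rightarrow> 'y \<Rightarrow> real) \<Rightarrow> nat \<Rightarrow> nat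
   \<Rightarrow> ('w list \<Rightarrow> 'x list \<Rightarrow> real) \<Rightarrow> 'y list \<Rightarrow> 'a list \<Rightarrow> real" where
  "recv_val \<mu> uR Q n k \<sigma> ys as =
     (\<Sum>ws\<in>words n. \<Sum>xs\<in>words k. prod_prior \<mu> ws * \<sigma> ws xs * chan_pow Q xs ys * avg_payoff uR ws as)"

definition BR ::
  "('w::finite \<Rightarrow> real) \<Rightarrow> ('w \<Rightarrow> 'a::finite \<Rightarrow> real) \<Rightarrow> ('x::finite \<Rightarrow> 'y::finite \<Rightarrow> real) \<Rightarrow> nat \<Rightarrow> nat
   \<Rightarrow> ('w list \<Rightarrow> 'x list \<Rightarrow> real) \<Rightarrow> ('y list \<Rightarrow> 'a list) set" where
  "BR \<mu> uR Q n k \<sigma> = {\<tau>. \<forall>ys\<in>words k. \<tau> ys \<in> words n \<and>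
       (\<forall>as\<in>words n. recv_val \<mu> uR Q n k \<sigma> ys as \<le> recv_val \<mu> uR Q n k \<sigma> ys (\<tau> ys))}"

definition sender_val ::
  "('w::finite \<Rightarrow> real) \<Rightarrow> ('w \<Rightarrow> 'a \<Rightarrow> real) \<Rightarrow> ('x::finite \<Rightarrow> 'y::finite \<Rightarrow> real) \<Rightarrow> nat \<Rightarrow> nat
   \<Rightarrow> ('w list \<Rightarrow> 'x list \<Rightarrow> real) \<Rightarrow> ('y list \<Rightarrow> 'a list) \<Rightarrow> real" where
  "sender_val \<mu> uS Q n k \<sigma> \<tau> =
     (\<Sum>ws\<in>words n. \<Sum>xs\<in>words k. \<Sum>ys\<in>words k.
        prod_prior \<mu> ws * \<sigma> ws xs * chan_pow Q xs ys * avg_payoff uS ws (\<tau> ys))"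

definition U_star ::
  "('w::finite \<Rightarrow> real) \<Rightarrow> ('w \<Rightarrow> 'a::finite \<Rightarrow> real) \<Rightarrow> ('w \<Rightarrow> 'a \<Rightarrow> real)
   \<Rightarrow> ('x::finite \<Rightarrow> 'y::finite \<Rightarrow> real) \<Rightarrow> nat \<Rightarrow> nat \<Rightarrow> real" where
  "U_star \<mu> uS uR Q n k =
     (SUP \<sigma>\<in>sender_strats n k. INF \<tau>\<in>BR \<mu> uR Q n k \<sigma>. sender_val \<mu> uS Q n k \<sigma> \<tau>)"

definition A_star :: "('w::finite \<Rightarrow> 'a \<Rightarrow> real) \<Rightarrow> ('w \<Rightarrow> real) \<Rightarrow> 'a set" where
  "A_star uR \<nu> = {a. \<forall>b. (\<Sum>\<omega>\<in>UNIV. \<nu> \<omega> * uR \<omega> b) \<le> (\<Sum>\<omega>\<in>UNIV. \<nu> \<omega> * uR \<omega> a)}"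

definition u_star_S ::
  "('w::finite \<Rightarrow> 'a::finite \<Rightarrow> real) \<Rightarrow> ('w \<Rightarrow> 'a \<Rightarrow> real) \<Rightarrow> ('w \<Rightarrow> real) \<Rightarrow> real" where
  "u_star_S uS uR \<nu> = Min ((\<lambda>a. \<Sum>\<omega>\<in>UNIV. \<nu> \<omega> * uS \<omega> a) ` A_star uR \<nu>)"

text \<open>Shannon entropy in bits (with 0 log 0 = 0).\<close>
definition entropy :: "('s::finite \<Rightarrow> real) \<Rightarrow> real" where
  "entropy q = - (\<Sum>s\<in>UNIV. q s * log 2 (q s))"

definition capacity :: "('x::finite \<Rightarrow> 'y::finite \<Rightarrow> real) \<Rightarrow> real" where
  "capacity Q = (SUP p\<in>{p. is_dist p}.
      entropy (\<lambda>y. \<Sum>x\<in>UNIV. p x * Q x y) - (\<Sum>x\<in>UNIV. p x * entropy (Q x)))"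

definition is_splitting :: "('w::finite \<Rightarrow> real) \<Rightarrow> (real \<times> ('w \<Rightarrow> real)) list \<Rightarrow> bool" where
  "is_splitting \<mu> ps \<longleftrightarrow>
     (\<forall>(l, \<nu>)\<in>set ps. 0 \<le> l \<and> is_dist \<nu>) \<and>
     sum_list (map fst ps) = 1 \<and>
     (\<forall>\<omega>. sum_list (map (\<lambda>(l, \<nu>). l * \<nu> \<omega>) ps) = \<mu> \<omega>)"

definition V ::
  "('w::finite \<Rightarrow> 'a::finite \<Rightarrow> real) \<Rightarrow> ('w \<Rightarrow> 'a \<Rightarrow> real) \<Rightarrow> ('w \<Rightarrow> real) \<Rightarrow> real \<Rightarrow> real" where
  "V uS uR \<mu> c = Sup {sum_list (map (\<lambda>(l, \<nu>). l * u_star_S uS uR \<nu>) ps) | ps.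
      is_splitting \<mu> ps \<and> entropy \<mu> - sum_list (map (\<lambda>(l, \<nu>). l * entropy \<nu>) ps) \<le> c}"

end

theory Submission
  imports Defs
begin

text \<open>Zero capacity forces all rows of the channel to coincide: the mutual information at the
  uniform input is the information gain of the output distribution split into the rows, a sum of
  Gibbs gaps that vanishes only if every row equals the output distribution. The signal is then
  independent of the state, so after every signal of positive probability a best response plays
  an action of \<open>A*(\<mu>)\<close> in every coordinate, and the sender gets \<open>u*_S(\<mu>)\<close> whatever her
  strategy. On the other side, by the same equality case of the concavity of entropy, the only
  splittings with no information gain are trivial, so \<open>V(\<mu>, 0) = u*_S(\<mu>)\<close>.\<close>

text \<open>\<open>gibbs_gap a b\<close> is the summand \<open>a ln (a/b)\<close> of a Kullback-Leibler divergence corrected by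
  \<open>b - a\<close>, which makes it nonnegative termwise.\<close>
definition gibbs_gap :: "real \<Rightarrow> real \<Rightarrow> real" where
  "gibbs_gap a b = (b - a) - (a * ln b - a * ln a)"

lemma gibbs_gap_pos_eq:
  assumes "0 < a" "0 < b"
  shows "gibbs_gap a b = a * ((b / a - 1) - ln (b / a))"
  using assms by (simp add: gibbs_gap_def ln_div field_simps)

lemma gibbs_gap_nonneg:
  assumes "0 \<le> a" "0 \<le> b" "0 < a \<Longrightarrow> 0 < b"
  shows "0 \<le> gibbs_gap a b"
proof (cases "a = 0")
  case False
  with assms have "0 < a" "0 < b" by auto
  then show ?thesis
    using ln_le_minus_one[of "b / a"] by (simp add: gibbs_gap_pos_eq)
qed (use assms in \<open>simp add: gibbs_gap_def\<close>)

lemma gibbs_gap_eq_0_imp_eq: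
  assumes "0 \<le> a" "0 \<le> b" "0 < a \<Longrightarrow> 0 < b" and "gibbs_gap a b = 0"
  shows "a = b"
proof (cases "a = 0")
  case False
  with assms have a: "0 < a" and b: "0 < b" by auto
  with assms(4) have "ln (b / a) = b / a - 1" by (simp add: gibbs_gap_pos_eq)
  then have "b / a = 1" using a b by (intro ln_eq_minus_one) auto
  then show ?thesis using a by simp
qed (use assms in \<open>simp add: gibbs_gap_def\<close>)

lemma entropy_ln: "entropy q = - (\<Sum>s\<in>UNIV. q s * ln (q s)) / ln 2"
  unfolding entropy_def log_def by (simp add: sum_divide_distrib)

lemma entropy_nonneg:
  assumes "is_dist q"
  shows "0 \<le> entropy q"
proof -
  have "q s * ln (q s) \<le> 0" for s
  proof -
    have q0: "0 \<le> q s" using assms unfolding is_dist_def by auto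
    have "q s \<le> (\<Sum>s\<in>UNIV. q s)" using assms unfolding is_dist_def by (intro member_le_sum) auto
    with assms have "q s \<le> 1" unfolding is_dist_def by simp
    with q0 show ?thesis by (cases "q s = 0") (auto simp: mult_nonneg_nonpos)
  qed
  then show ?thesis unfolding entropy_ln by (simp add: sum_nonpos divide_nonpos_pos)
qed

lemma entropy_le_card:
  fixes q :: "'s::finite \<Rightarrow> real"
  assumes "\<forall>s. 0 \<le> q s"
  shows "entropy q \<le> real (card (UNIV :: 's set)) / ln 2"
proof -
  have "- (q s * ln (q s)) \<le> 1" for s
    using gibbs_gap_nonneg[of "q s" 1] assms[rule_format, of s] by (simp add: gibbs_gap_def)
  then have "(\<Sum>s\<in>UNIV. - (q s * ln (q s))) \<le> real (card (UNIV :: 's set))"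
    using sum_mono[of UNIV "\<lambda>s. - (q s * ln (q s))" "\<lambda>_. 1"] by simp
  then show ?thesis unfolding entropy_ln by (intro divide_right_mono) (simp_all add: sum_negf)
qed

lemma entropy_mixture_gap:
  fixes \<nu> :: "'i \<Rightarrow> 's::finite \<Rightarrow> real"
  assumes l1: "sum l I = 1" and mix: "\<And>s. \<mu> s = (\<Sum>i\<in>I. l i * \<nu> i s)"
  shows "entropy \<mu> - (\<Sum>i\<in>I. l i * entropy (\<nu> i))
       = (\<Sum>s\<in>UNIV. \<Sum>i\<in>I. l i * gibbs_gap (\<nu> i s) (\<mu> s)) / ln 2"
proof -
  have gap: "(\<Sum>i\<in>I. l i * gibbs_gap (\<nu> i s) (\<mu> s))
      = (\<Sum>i\<in>I. l i * (\<nu> i s * ln (\<nu> i s))) - \<mu> s * ln (\<mu> s)" for s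
  proof -
    have "(\<Sum>i\<in>I. l i * gibbs_gap (\<nu> i s) (\<mu> s))
        = (\<Sum>i\<in>I. l i) * \<mu> s - (\<Sum>i\<in>I. l i * \<nu> i s)
          - (\<Sum>i\<in>I. l i * \<nu> i s) * ln (\<mu> s) + (\<Sum>i\<in>I. l i * (\<nu> i s * ln (\<nu> i s)))"
      unfolding gibbs_gap_def
      by (simp add: sum_distrib_right sum_distrib_left sum_subtractf sum.distrib algebra_simps)
    then show ?thesis using l1 mix[of s] by simp
  qed
  have "(\<Sum>i\<in>I. l i * entropy (\<nu> i))
      = - (\<Sum>s\<in>UNIV. \<Sum>i\<in>I. l i * (\<nu> i s * ln (\<nu> i s))) / ln 2"
    unfolding entropy_ln
    by (simp add: sum_distrib_left sum_divide_distrib sum.swap[of _ I] sum_negf algebra_simps)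
  then show ?thesis unfolding entropy_ln gap by (simp add: sum_subtractf diff_divide_distrib)
qed

lemma mixture_gibbs_gap_nonneg:
  fixes \<nu> :: "'i \<Rightarrow> 's \<Rightarrow> real"
  assumes "finite I" and l0: "\<forall>i\<in>I. 0 \<le> l i" and \<nu>0: "\<forall>i\<in>I. \<forall>s. 0 \<le> \<nu> i s"
    and mix: "\<And>s. \<mu> s = (\<Sum>i\<in>I. l i * \<nu> i s)" and "i \<in> I"
  shows "0 \<le> l i * gibbs_gap (\<nu> i s) (\<mu> s)"
proof (cases "l i = 0")
  case False
  with l0 \<open>i \<in> I\<close> have li: "0 < l i" by force
  have "l i * \<nu> i s \<le> \<mu> s"
    unfolding mix using assms by (intro member_le_sum mult_nonneg_nonneg) auto
  moreover have "0 \<le> l i * \<nu> i s" and "0 < \<nu> i s \<Longrightarrow> 0 < l i * \<nu> i s"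
    using li \<nu>0 \<open>i \<in> I\<close> by auto
  ultimately have "0 \<le> gibbs_gap (\<nu> i s) (\<mu> s)"
    using \<nu>0 \<open>i \<in> I\<close> by (intro gibbs_gap_nonneg) auto
  with li show ?thesis by simp
qed simp

lemma entropy_mixture_le:
  fixes \<nu> :: "'i \<Rightarrow> 's::finite \<Rightarrow> real"
  assumes "finite I" "\<forall>i\<in>I. 0 \<le> l i" "\<forall>i\<in>I. \<forall>s. 0 \<le> \<nu> i s"
    and "sum l I = 1" and "\<And>s. \<mu> s = (\<Sum>i\<in>I. l i * \<nu> i s)"
  shows "(\<Sum>i\<in>I. l i * entropy (\<nu> i)) \<le> entropy \<mu>"
proof -
  have "0 \<le> (\<Sum>s\<in>UNIV. \<Sum>i\<in>I. l i * gibbs_gap (\<nu> i s) (\<mu> s)) / ln 2"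
    using mixture_gibbs_gap_nonneg[OF assms(1-3,5)] by (intro divide_nonneg_pos sum_nonneg) auto
  then show ?thesis using entropy_mixture_gap[of l I \<mu> \<nu>, OF assms(4,5)] by linarith
qed

lemma entropy_mixture_eq_imp_components_eq:
  fixes \<nu> :: "'i \<Rightarrow> 's::finite \<Rightarrow> real"
  assumes fin: "finite I" and l0: "\<forall>i\<in>I. 0 \<le> l i" and \<nu>0: "\<forall>i\<in>I. \<forall>s. 0 \<le> \<nu> i s"
    and l1: "sum l I = 1" and mix: "\<And>s. \<mu> s = (\<Sum>i\<in>I. l i * \<nu> i s)"
    and eq: "entropy \<mu> \<le> (\<Sum>i\<in>I. l i * entropy (\<nu> i))"
    and i: "i \<in> I" "0 < l i"
  shows "\<nu> i = \<mu>"
proof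
  fix s
  let ?g = "\<lambda>j s. l j * gibbs_gap (\<nu> j s) (\<mu> s)"
  have g0: "0 \<le> ?g j s" if "j \<in> I" for j s
    using mixture_gibbs_gap_nonneg[OF fin l0 \<nu>0 mix that] .
  have "(\<Sum>s\<in>UNIV. \<Sum>j\<in>I. ?g j s) / ln 2 \<le> 0"
    using entropy_mixture_gap[of l I \<mu> \<nu>, OF l1 mix] eq by linarith
  then have "(\<Sum>s\<in>UNIV. \<Sum>j\<in>I. ?g j s) \<le> 0" by (simp add: divide_le_0_iff)
  then have "(\<Sum>s\<in>UNIV. \<Sum>j\<in>I. ?g j s) = 0"
    using g0 by (intro antisym sum_nonneg) auto
  then have "(\<Sum>j\<in>I. ?g j s) = 0"
    using g0 by (subst (asm) sum_nonneg_eq_0_iff) (auto intro: sum_nonneg)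
  then have "?g i s = 0" using g0 fin i(1) by (subst (asm) sum_nonneg_eq_0_iff) auto
  with i(2) have gap0: "gibbs_gap (\<nu> i s) (\<mu> s) = 0" by simp
  have "l i * \<nu> i s \<le> \<mu> s"
    unfolding mix using fin l0 \<nu>0 i(1) by (intro member_le_sum mult_nonneg_nonneg) auto
  moreover have "0 \<le> l i * \<nu> i s" and "0 < \<nu> i s \<Longrightarrow> 0 < l i * \<nu> i s"
    using i \<nu>0 by auto
  ultimately show "\<nu> i s = \<mu> s"
    using \<nu>0 i(1) by (intro gibbs_gap_eq_0_imp_eq[OF _ _ _ gap0]) auto
qed

lemma capacity_zero_imp_constant_channel:
  fixes Q :: "'x::finite \<Rightarrow> 'y::finite \<Rightarrow> real"
  assumes Qd: "\<forall>x. is_dist (Q x)" and c0: "capacity Q = 0"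
  shows "\<exists>q. is_dist q \<and> Q = (\<lambda>_. q)"
proof -
  define info where
    "info p = entropy (\<lambda>y. \<Sum>x\<in>UNIV. p x * Q x y) - (\<Sum>x\<in>UNIV. p x * entropy (Q x))"
    for p :: "'x \<Rightarrow> real"
  define p :: "'x \<Rightarrow> real" where "p x = 1 / real (card (UNIV :: 'x set))" for x
  define out where "out y = (\<Sum>x\<in>UNIV. p x * Q x y)" for y
  have Q0: "\<forall>x\<in>UNIV. \<forall>y. 0 \<le> Q x y" using Qd unfolding is_dist_def by auto
  have p0: "\<forall>x\<in>UNIV. 0 < p x" unfolding p_def by (simp add: finite_UNIV_card_ge_0)
  have pd: "is_dist p" unfolding is_dist_def p_def by simp
  have "bdd_above (info ` {p. is_dist p})"
  proof (rule bdd_aboveI2)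
    fix p' :: "'x \<Rightarrow> real" assume "p' \<in> {p. is_dist p}"
    then have p'0: "\<forall>x. 0 \<le> p' x" by (simp add: is_dist_def)
    have "0 \<le> (\<Sum>x\<in>UNIV. p' x * entropy (Q x))"
      using p'0 Qd entropy_nonneg by (auto intro!: sum_nonneg mult_nonneg_nonneg)
    moreover have "entropy (\<lambda>y. \<Sum>x\<in>UNIV. p' x * Q x y) \<le> real (card (UNIV :: 'y set)) / ln 2"
      using p'0 Q0 by (intro entropy_le_card) (auto intro!: sum_nonneg)
    ultimately show "info p' \<le> real (card (UNIV :: 'y set)) / ln 2" unfolding info_def by linarith
  qed
  then have "info p \<le> capacity Q"
    unfolding capacity_def info_def[symmetric] using pd by (intro cSUP_upper) auto
  then have "entropy out \<le> (\<Sum>x\<in>UNIV. p x * entropy (Q x))"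
    using c0 unfolding info_def out_def by simp
  then have "Q x = out" for x
    using p0 Q0 pd
    by (intro entropy_mixture_eq_imp_components_eq[of UNIV p Q out]) (auto simp: is_dist_def out_def)
  then show ?thesis using Qd by auto
qed

lemma sum_list_map_nth: "sum_list (map f xs) = (\<Sum>i<length xs. f (xs ! i))"
  by (simp add: sum_list_sum_nth atLeast0LessThan)

lemma splitting_without_gain_trivial:
  assumes sp: "is_splitting \<mu> ps"
    and gain: "entropy \<mu> - sum_list (map (\<lambda>(l, \<nu>). l * entropy \<nu>) ps) \<le> 0"
    and mem: "(l, \<nu>) \<in> set ps" and l0: "0 < l"
  shows "\<nu> = \<mu>"
proof -
  obtain j where j: "j < length ps" "ps ! j = (l, \<nu>)" using mem by (auto simp: in_set_conv_nth)
  define L where "L i = fst (ps ! i)" for i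
  define N where "N i = snd (ps ! i)" for i
  have LN: "i < length ps \<Longrightarrow> 0 \<le> L i \<and> is_dist (N i)" for i
    using sp nth_mem[of i ps] unfolding is_splitting_def L_def N_def by (auto simp: case_prod_beta)
  have "N j = \<mu>"
  proof (rule entropy_mixture_eq_imp_components_eq[of "{..<length ps}" L N])
    show "sum L {..<length ps} = 1" "\<And>s. \<mu> s = (\<Sum>i\<in>{..<length ps}. L i * N i s)"
      using sp unfolding is_splitting_def L_def N_def by (simp_all add: sum_list_map_nth case_prod_beta)
    show "entropy \<mu> \<le> (\<Sum>i\<in>{..<length ps}. L i * entropy (N i))"
      using gain unfolding L_def N_def by (simp add: sum_list_map_nth case_prod_beta)
  qed (use LN j l0 in \<open>auto simp: is_dist_def L_def\<close>)
  then show ?thesis using j by (simp add: N_def)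
qed

lemma V_zero:
  assumes "is_dist \<mu>"
  shows "V uS uR \<mu> 0 = u_star_S uS uR \<mu>"
proof -
  let ?u = "u_star_S uS uR"
  have "{sum_list (map (\<lambda>(l, \<nu>). l * ?u \<nu>) ps) | ps.
      is_splitting \<mu> ps \<and> entropy \<mu> - sum_list (map (\<lambda>(l, \<nu>). l * entropy \<nu>) ps) \<le> 0}
      = {?u \<mu>}"
  proof (intro equalityI subsetI)
    fix v assume "v \<in> {?u \<mu>}"
    moreover have "is_splitting \<mu> [(1, \<mu>)]" using assms unfolding is_splitting_def by simp
    ultimately show "v \<in> {sum_list (map (\<lambda>(l, \<nu>). l * ?u \<nu>) ps) | ps.
      is_splitting \<mu> ps \<and> entropy \<mu> - sum_list (map (\<lambda>(l, \<nu>). l * entropy \<nu>) ps) \<le> 0}"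
      by (auto intro!: exI[of _ "[(1, \<mu>)]"])
  next
    fix v assume "v \<in> {sum_list (map (\<lambda>(l, \<nu>). l * ?u \<nu>) ps) | ps.
      is_splitting \<mu> ps \<and> entropy \<mu> - sum_list (map (\<lambda>(l, \<nu>). l * entropy \<nu>) ps) \<le> 0}"
    then obtain ps where v: "v = sum_list (map (\<lambda>(l, \<nu>). l * ?u \<nu>) ps)"
      and sp: "is_splitting \<mu> ps"
      and gain: "entropy \<mu> - sum_list (map (\<lambda>(l, \<nu>). l * entropy \<nu>) ps) \<le> 0" by blast
    have trivial: "map (\<lambda>(l, \<nu>). l * ?u \<nu>) ps = map (\<lambda>(l, \<nu>). l * ?u \<mu>) ps"
    proof (rule map_cong[OF refl], clarify)
      fix l \<nu> assume mem: "(l, \<nu>) \<in> set ps"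
      have "0 \<le> l" using sp mem unfolding is_splitting_def by auto
      then show "l * ?u \<nu> = l * ?u \<mu>"
        using splitting_without_gain_trivial[OF sp gain mem] by (cases "l = 0") auto
    qed
    have "v = sum_list (map fst ps) * ?u \<mu>"
      unfolding v trivial by (induction ps) (auto simp: algebra_simps)
    then show "v \<in> {?u \<mu>}" using sp unfolding is_splitting_def by simp
  qed
  then show ?thesis unfolding V_def by simp
qed

lemma finite_words: "finite (words n :: 'a::finite list set)"
  using finite_lists_length_eq[OF finite_UNIV, of n] by (simp add: words_def)

lemma words_0: "words 0 = {[]}"
  unfolding words_def by auto

lemma sum_words_Suc:
  fixes g :: "'a::finite list \<Rightarrow> real"
  shows "(\<Sum>xs\<in>words (Suc n). g xs) = (\<Sum>x\<in>UNIV. \<Sum>xs\<in>words n. g (x # xs))"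
proof -
  have words: "words (Suc n) = (\<lambda>(x, xs). x # xs) ` (UNIV \<times> words n)"
    unfolding words_def by (auto simp: length_Suc_conv image_iff)
  have inj: "inj_on (\<lambda>(x, xs). x # xs) (UNIV \<times> words n)"
    by (auto simp: inj_on_def)
  have "(\<Sum>xs\<in>words (Suc n). g xs) = (\<Sum>(x, xs)\<in>UNIV \<times> words n. g (x # xs))"
    unfolding words by (subst sum.reindex[OF inj]) (simp add: case_prod_beta)
  then show ?thesis by (simp add: sum.cartesian_product)
qed

lemma sum_prod_prior_words:
  assumes "is_dist \<mu>"
  shows "(\<Sum>ws\<in>words n. prod_prior \<mu> ws) = 1"
proof (induction n)
  case (Suc n)
  then show ?case
    using assms by (simp add: sum_words_Suc prod_prior_def sum_distrib_left[symmetric] is_dist_def)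
qed (simp add: words_0 prod_prior_def)

lemma prod_prior_nonneg: "(\<forall>s. 0 \<le> q s) \<Longrightarrow> 0 \<le> prod_prior q ys"
  unfolding prod_prior_def by (induction ys) auto

lemma sum_prod_prior_nth:
  assumes "is_dist \<mu>" and "t < n"
  shows "(\<Sum>ws\<in>words n. prod_prior \<mu> ws * f (ws ! t)) = (\<Sum>\<omega>\<in>UNIV. \<mu> \<omega> * f \<omega>)"
  using assms(2)
proof (induction n arbitrary: t)
  case (Suc n)
  show ?case
  proof (cases t)
    case 0
    then show ?thesis using sum_prod_prior_words[OF assms(1), of n]
      by (simp add: sum_words_Suc prod_prior_def sum_distrib_left[symmetric] algebra_simps)
  next
    case (Suc t')
    with Suc.prems have "t' < n" by simp
    have "(\<Sum>ws\<in>words (Suc n). prod_prior \<mu> ws * f (ws ! t))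
        = (\<Sum>w\<in>UNIV. \<mu> w * (\<Sum>ws\<in>words n. prod_prior \<mu> ws * f (ws ! t')))"
      unfolding sum_words_Suc \<open>t = Suc t'\<close> by (simp add: prod_prior_def sum_distrib_left algebra_simps)
    also have "\<dots> = (\<Sum>w\<in>UNIV. \<mu> w) * (\<Sum>\<omega>\<in>UNIV. \<mu> \<omega> * f \<omega>)"
      using Suc.IH[OF \<open>t' < n\<close>] by (simp add: sum_distrib_right)
    finally show ?thesis using assms(1) by (simp add: is_dist_def)
  qed
qed simp

definition exp_payoff :: "('w::finite \<Rightarrow> real) \<Rightarrow> ('w \<Rightarrow> 'a \<Rightarrow> real) \<Rightarrow> 'a \<Rightarrow> real" where
  "exp_payoff \<nu> u a = (\<Sum>\<omega>\<in>UNIV. \<nu> \<omega> * u \<omega> a)"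

definition exp_avg_payoff ::
  "('w::finite \<Rightarrow> real) \<Rightarrow> nat \<Rightarrow> ('w \<Rightarrow> 'a \<Rightarrow> real) \<Rightarrow> 'a list \<Rightarrow> real" where
  "exp_avg_payoff \<mu> n u as = (\<Sum>ws\<in>words n. prod_prior \<mu> ws * avg_payoff u ws as)"

lemma exp_avg_payoff_eq:
  assumes "is_dist \<mu>"
  shows "exp_avg_payoff \<mu> n u as = (\<Sum>t<n. exp_payoff \<mu> u (as ! t)) / real n"
proof -
  have "exp_avg_payoff \<mu> n u as
      = (\<Sum>ws\<in>words n. prod_prior \<mu> ws * (\<Sum>t<n. u (ws ! t) (as ! t))) / real n"
    unfolding exp_avg_payoff_def avg_payoff_def sum_divide_distrib
    by (intro sum.cong) (auto simp: words_def)
  also have "\<dots> = (\<Sum>t<n. \<Sum>ws\<in>words n. prod_prior \<mu> ws * u (ws ! t) (as ! t)) / real n"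
    by (simp add: sum_distrib_left sum.swap[of _ "words n"])
  also have "\<dots> = (\<Sum>t<n. exp_payoff \<mu> u (as ! t)) / real n"
    unfolding exp_payoff_def
    by (intro arg_cong2[where f="(/)"] sum.cong) (auto intro!: sum_prod_prior_nth[OF assms])
  finally show ?thesis .
qed

lemma exp_avg_payoff_replicate:
  assumes "is_dist \<mu>" and "0 < n"
  shows "exp_avg_payoff \<mu> n u (replicate n a) = exp_payoff \<mu> u a"
  using assms by (simp add: exp_avg_payoff_eq)

lemma chan_pow_const:
  "length xs = length ys \<Longrightarrow> chan_pow (\<lambda>_. q) xs ys = prod_prior q ys"
  unfolding chan_pow_def prod_prior_def by (induction xs ys rule: list_induct2) auto

lemma sum_sender_strat:
  "\<sigma> \<in> sender_strats n k \<Longrightarrow> ws \<in> words n \<Longrightarrow> (\<Sum>xs\<in>words k. \<sigma> ws xs) = 1"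
  unfolding sender_strats_def is_dist_on_def by auto

lemma recv_val_const_channel:
  assumes \<sigma>: "\<sigma> \<in> sender_strats n k" and ys: "ys \<in> words k"
  shows "recv_val \<mu> uR (\<lambda>_. q) n k \<sigma> ys as = prod_prior q ys * exp_avg_payoff \<mu> n uR as"
proof -
  have "recv_val \<mu> uR (\<lambda>_. q) n k \<sigma> ys as
      = (\<Sum>ws\<in>words n. prod_prior q ys * (prod_prior \<mu> ws * avg_payoff uR ws as)
                          * (\<Sum>xs\<in>words k. \<sigma> ws xs))"
    unfolding recv_val_def sum_distrib_left
    by (intro sum.cong refl) (use ys in \<open>auto simp: chan_pow_const words_def algebra_simps\<close>)
  also have "\<dots> = prod_prior q ys * exp_avg_payoff \<mu> n uR as"
    by (simp add: sum_sender_strat[OF \<sigma>] exp_avg_payoff_def sum_distrib_left)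
  finally show ?thesis .
qed

lemma sender_val_const_channel:
  assumes \<sigma>: "\<sigma> \<in> sender_strats n k"
  shows "sender_val \<mu> uS (\<lambda>_. q) n k \<sigma> \<tau>
       = (\<Sum>ys\<in>words k. prod_prior q ys * exp_avg_payoff \<mu> n uS (\<tau> ys))"
proof -
  let ?g = "\<lambda>ws ys. prod_prior q ys * (prod_prior \<mu> ws * avg_payoff uS ws (\<tau> ys))"
  have "(\<Sum>xs\<in>words k. \<Sum>ys\<in>words k.
          prod_prior \<mu> ws * \<sigma> ws xs * chan_pow (\<lambda>_. q) xs ys * avg_payoff uS ws (\<tau> ys))
      = (\<Sum>ys\<in>words k. ?g ws ys)" if ws: "ws \<in> words n" for ws
  proof -
    have "(\<Sum>xs\<in>words k. \<Sum>ys\<in>words k.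
          prod_prior \<mu> ws * \<sigma> ws xs * chan_pow (\<lambda>_. q) xs ys * avg_payoff uS ws (\<tau> ys))
        = (\<Sum>xs\<in>words k. \<sigma> ws xs * (\<Sum>ys\<in>words k. ?g ws ys))"
      by (intro sum.cong refl) (auto simp: chan_pow_const words_def sum_distrib_left algebra_simps)
    also have "\<dots> = (\<Sum>ys\<in>words k. ?g ws ys)"
      by (simp add: sum_distrib_right[symmetric] sum_sender_strat[OF \<sigma> ws])
    finally show ?thesis .
  qed
  then have "sender_val \<mu> uS (\<lambda>_. q) n k \<sigma> \<tau> = (\<Sum>ws\<in>words n. \<Sum>ys\<in>words k. ?g ws ys)"
    unfolding sender_val_def by (intro sum.cong) auto
  also have "\<dots> = (\<Sum>ys\<in>words k. prod_prior q ys * exp_avg_payoff \<mu> n uS (\<tau> ys))"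
    by (simp add: exp_avg_payoff_def sum_distrib_left sum.swap[of _ "words n"])
  finally show ?thesis .
qed

lemma A_star_exp_payoff: "A_star uR \<nu> = {a. \<forall>b. exp_payoff \<nu> uR b \<le> exp_payoff \<nu> uR a}"
  unfolding A_star_def exp_payoff_def by simp

lemma u_star_S_exp_payoff: "u_star_S uS uR \<nu> = Min (exp_payoff \<nu> uS ` A_star uR \<nu>)"
  unfolding u_star_S_def exp_payoff_def by simp

lemma A_star_nonempty: "A_star uR \<nu> \<noteq> ({} :: 'a::finite set)"
proof -
  have "Max (range (exp_payoff \<nu> uR)) \<in> range (exp_payoff \<nu> uR)"
    by (rule Max_in) auto
  then obtain a where "exp_payoff \<nu> uR a = Max (range (exp_payoff \<nu> uR))"
    by (metis rangeE)
  then have "a \<in> A_star uR \<nu>" unfolding A_star_exp_payoff by simp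
  then show ?thesis by blast
qed

lemma u_star_S_le: "a \<in> A_star uR \<nu> \<Longrightarrow> u_star_S uS uR \<nu> \<le> exp_payoff \<nu> uS a"
  unfolding u_star_S_exp_payoff by (intro Min_le) auto

lemma u_star_S_attained:
  obtains a where "a \<in> A_star uR \<nu>" and "exp_payoff \<nu> uS a = u_star_S uS uR \<nu>"
proof -
  have "u_star_S uS uR \<nu> \<in> exp_payoff \<nu> uS ` A_star uR \<nu>"
    unfolding u_star_S_exp_payoff using A_star_nonempty by (intro Min_in) auto
  then show ?thesis using that by force
qed

text \<open>After a signal of positive probability the receiver's payoff is a positive multiple of the
  sum over coordinates of the prior expected payoffs, so a coordinate outside \<open>A*(\<mu>)\<close> could be
  improved.\<close>
lemma BR_const_channel_in_A_star:
  assumes \<mu>: "is_dist \<mu>" and \<sigma>: "\<sigma> \<in> sender_strats n k"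
    and \<tau>: "\<tau> \<in> BR \<mu> uR (\<lambda>_. q) n k \<sigma>" and ys: "ys \<in> words k"
    and pos: "0 < prod_prior q ys" and t: "t < n"
  shows "\<tau> ys ! t \<in> A_star uR \<mu>"
proof (rule ccontr)
  let ?e = "exp_payoff \<mu> uR"
  assume "\<tau> ys ! t \<notin> A_star uR \<mu>"
  then obtain b where b: "?e (\<tau> ys ! t) < ?e b" unfolding A_star_exp_payoff by (auto simp: not_le)
  let ?as = "\<tau> ys" and ?bs = "(\<tau> ys)[t := b]"
  have as: "?as \<in> words n" using \<tau> ys unfolding BR_def by auto
  then have bs: "?bs \<in> words n" unfolding words_def by simp
  have "(\<Sum>i<n. ?e (?as ! i)) = ?e (?as ! t) + (\<Sum>i\<in>{..<n} - {t}. ?e (?bs ! i))"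
    using t by (simp add: sum.remove[of "{..<n}" t])
  also have "\<dots> < ?e b + (\<Sum>i\<in>{..<n} - {t}. ?e (?bs ! i))"
    using b by simp
  also have "\<dots> = (\<Sum>i<n. ?e (?bs ! i))"
    using t as by (simp add: sum.remove[of "{..<n}" t] words_def)
  finally have "exp_avg_payoff \<mu> n uR ?as < exp_avg_payoff \<mu> n uR ?bs"
    using t by (simp add: exp_avg_payoff_eq[OF \<mu>] divide_strict_right_mono)
  then have "recv_val \<mu> uR (\<lambda>_. q) n k \<sigma> ys ?as < recv_val \<mu> uR (\<lambda>_. q) n k \<sigma> ys ?bs"
    unfolding recv_val_const_channel[OF \<sigma> ys] using pos by simp
  moreover have "recv_val \<mu> uR (\<lambda>_. q) n k \<sigma> ys ?bs \<le> recv_val \<mu> uR (\<lambda>_. q) n k \<sigma> ys ?as"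
    using \<tau> ys bs unfolding BR_def by auto
  ultimately show False by simp
qed

lemma sender_val_BR_const_channel_ge:
  assumes \<mu>: "is_dist \<mu>" and q: "is_dist q" and \<sigma>: "\<sigma> \<in> sender_strats n k"
    and \<tau>: "\<tau> \<in> BR \<mu> uR (\<lambda>_. q) n k \<sigma>" and n: "0 < n"
  shows "u_star_S uS uR \<mu> \<le> sender_val \<mu> uS (\<lambda>_. q) n k \<sigma> \<tau>"
proof -
  let ?u = "u_star_S uS uR \<mu>"
  have q0: "\<forall>s. 0 \<le> q s" using q unfolding is_dist_def by auto
  have "prod_prior q ys * ?u \<le> prod_prior q ys * exp_avg_payoff \<mu> n uS (\<tau> ys)"
    if ys: "ys \<in> words k" for ys
  proof (cases "prod_prior q ys = 0")
    case False
    with prod_prior_nonneg[OF q0, of ys] have pos: "0 < prod_prior q ys" by simp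
    have "(\<Sum>t<n. ?u) \<le> (\<Sum>t<n. exp_payoff \<mu> uS (\<tau> ys ! t))"
      using BR_const_channel_in_A_star[OF \<mu> \<sigma> \<tau> ys pos] by (intro sum_mono u_star_S_le) auto
    then have "?u \<le> exp_avg_payoff \<mu> n uS (\<tau> ys)"
      using n by (simp add: exp_avg_payoff_eq[OF \<mu>] le_divide_eq mult.commute)
    then show ?thesis using pos by simp
  qed simp
  then have "(\<Sum>ys\<in>words k. prod_prior q ys * ?u)
      \<le> (\<Sum>ys\<in>words k. prod_prior q ys * exp_avg_payoff \<mu> n uS (\<tau> ys))"
    by (rule sum_mono)
  then show ?thesis
    by (simp add: sender_val_const_channel[OF \<sigma>] sum_distrib_right[symmetric]
        sum_prod_prior_words[OF q])
qed

lemma replicate_A_star_in_BR: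
  fixes uR :: "'w::finite \<Rightarrow> 'a::finite \<Rightarrow> real" and q :: "'y::finite \<Rightarrow> real"
  assumes \<mu>: "is_dist \<mu>" and q: "is_dist q" and \<sigma>: "\<sigma> \<in> sender_strats n k"
    and a: "a \<in> A_star uR \<mu>"
  shows "(\<lambda>_. replicate n a) \<in> BR \<mu> uR (\<lambda>_. q) n k \<sigma>"
  unfolding BR_def
proof (intro CollectI ballI conjI)
  fix ys :: "'y list" and as :: "'a list" assume ys: "ys \<in> words k" and "as \<in> words n"
  have "(\<Sum>t<n. exp_payoff \<mu> uR (as ! t)) \<le> (\<Sum>t<n. exp_payoff \<mu> uR (replicate n a ! t))"
    using a unfolding A_star_exp_payoff by (intro sum_mono) auto
  then have "exp_avg_payoff \<mu> n uR as \<le> exp_avg_payoff \<mu> n uR (replicate n a)"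
    unfolding exp_avg_payoff_eq[OF \<mu>] by (rule divide_right_mono) auto
  then show "recv_val \<mu> uR (\<lambda>_. q) n k \<sigma> ys as
      \<le> recv_val \<mu> uR (\<lambda>_. q) n k \<sigma> ys (replicate n a)"
    unfolding recv_val_const_channel[OF \<sigma> ys]
    using prod_prior_nonneg[of q ys] q by (intro mult_left_mono) (auto simp: is_dist_def)
qed (simp add: words_def)

lemma INF_BR_const_channel:
  assumes \<mu>: "is_dist \<mu>" and q: "is_dist q" and \<sigma>: "\<sigma> \<in> sender_strats n k" and n: "0 < n"
  shows "(INF \<tau>\<in>BR \<mu> uR (\<lambda>_. q) n k \<sigma>. sender_val \<mu> uS (\<lambda>_. q) n k \<sigma> \<tau>) = u_star_S uS uR \<mu>"
proof (rule cInf_eq_minimum)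
  obtain a where a: "a \<in> A_star uR \<mu>" "exp_payoff \<mu> uS a = u_star_S uS uR \<mu>"
    by (rule u_star_S_attained)
  have "sender_val \<mu> uS (\<lambda>_. q) n k \<sigma> (\<lambda>_. replicate n a) = u_star_S uS uR \<mu>"
    by (simp add: sender_val_const_channel[OF \<sigma>] exp_avg_payoff_replicate[OF \<mu> n] a(2)
        sum_distrib_right[symmetric] sum_prod_prior_words[OF q])
  then show "u_star_S uS uR \<mu> \<in> sender_val \<mu> uS (\<lambda>_. q) n k \<sigma> ` BR \<mu> uR (\<lambda>_. q) n k \<sigma>"
    using replicate_A_star_in_BR[OF \<mu> q \<sigma> a(1)] by (metis image_eqI)
qed (use sender_val_BR_const_channel_ge[OF \<mu> q \<sigma> _ n] in blast)

lemma sender_strats_nonempty: "sender_strats n k \<noteq> ({} :: ('w list \<Rightarrow> 'x::finite list \<Rightarrow> real) set)"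
proof -
  fix x :: 'x
  let ?\<sigma> = "\<lambda>(_::'w list) xs. if xs = replicate k x then 1 else 0 :: real"
  have "?\<sigma> \<in> sender_strats n k"
    using finite_words[of k, where 'a='x]
    by (auto simp: sender_strats_def is_dist_on_def words_def)
  then show ?thesis by blast
qed

lemma U_star_const_channel:
  assumes "is_dist \<mu>" and "is_dist q" and "0 < n"
  shows "U_star \<mu> uS uR (\<lambda>_. q) n k = u_star_S uS uR \<mu>"
  unfolding U_star_def using assms by (simp add: INF_BR_const_channel sender_strats_nonempty)

theorem lemma2:
  fixes \<mu> :: "'w::finite \<Rightarrow> real"
    and uS uR :: "'w \<Rightarrow> 'a::finite \<Rightarrow> real"
    and Q :: "'x::finite \<Rightarrow> 'y::finite \<Rightarrow> real"
    and n k :: nat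
  assumes "is_dist \<mu>"
    and "\<forall>x. is_dist (Q x)"
    and "capacity Q = 0"
    and "0 < n" and "0 < k"
  shows "U_star \<mu> uS uR Q n k = V uS uR \<mu> (real k / real n * capacity Q)
       \<and> V uS uR \<mu> (real k / real n * capacity Q) = u_star_S uS uR \<mu>"
proof -
  obtain q where "is_dist q" and Q: "Q = (\<lambda>_. q)"
    using capacity_zero_imp_constant_channel[OF assms(2,3)] by blast
  then have "U_star \<mu> uS uR Q n k = u_star_S uS uR \<mu>"
    using U_star_const_channel[OF assms(1) _ assms(4)] by simp
  moreover have "V uS uR \<mu> (real k / real n * capacity Q) = u_star_S uS uR \<mu>"
    using V_zero[OF assms(1)] assms(3) by simp
  ultimately show ?thesis by simp
qed

end
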